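(* Let $K$ be an infinite compact Hausdorff space. Then $biort_1(C(K))=s(K)$.
   Context: $C(K)$ is the Banach space of continuous real functions on $K$ with the sup norm; functionals on $C(K)$ are identified with Radon measures $\mu\in M(K)$, $\mu(f)=\int f\,d\mu$; $\delta_x$ is the Dirac measure at $x$. A measure is $n$-supported if it equals $a_1\delta_{x_1}+\dots+a_n\delta_{x_n}$ for some $x_k\in K$, $a_k\in\mathbb R$. A biorthogonal system $(f_i,\mu_i)_{i\in I}$ in $C(K)$ ($\mu_i(f_i)=1$, $\mu_i(f_j)=0$ for $i\neq j$) is $n$-supported if all $\mu_i$ are $n$-supported; $biort_n(C(K))$ is the supremum of $|I|$ over $n$-supported biorthogonal systems. $s(K)$ is the supremum of cardinalities of discrete subspaces of $K$. *)

theory Defs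
  imports "HOL-Analysis.Analysis"
begin

unbundle cardinal_syntax

text \<open>A functional on C(K) is modelled as a map mu :: ('a => real) => real, of which only the
  values on continuous functions matter.\<close>

definition CK :: "'a topology \<Rightarrow> ('a \<Rightarrow> real) set" where
  "CK X = {f. continuous_map X euclideanreal f}"

definition n_supported :: "'a topology \<Rightarrow> nat \<Rightarrow> (('a \<Rightarrow> real) \<Rightarrow> real) \<Rightarrow> bool" where
  "n_supported X n \<mu> \<longleftrightarrow>
     (\<exists>a :: nat \<Rightarrow> real. \<exists>x :: nat \<Rightarrow> 'a. (\<forall>k<n. x k \<in> topspace X) \<and>
        (\<forall>f\<in>CK X. \<mu> f = (\<Sum>k<n. a k * f (x k))))"

definition biorth_system :: "'a topology \<Rightarrow> nat \<Rightarrow>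
    (('a \<Rightarrow> real) \<times> (('a \<Rightarrow> real) \<Rightarrow> real)) set \<Rightarrow> bool" where
  "biorth_system X n S \<longleftrightarrow>
     (\<forall>(f, \<mu>)\<in>S. f \<in> CK X \<and> n_supported X n \<mu> \<and> \<mu> f = 1) \<and>
     (\<forall>(f, \<mu>)\<in>S. \<forall>(g, \<nu>)\<in>S. (f, \<mu>) \<noteq> (g, \<nu>) \<longrightarrow> \<mu> g = 0)"

text \<open>"biort_n(C(K)) <= |T|": every n-supported biorthogonal system has at most |T| elements.\<close>
definition biort_le :: "'a topology \<Rightarrow> nat \<Rightarrow> 'b set \<Rightarrow> bool" where
  "biort_le X n T \<longleftrightarrow> (\<forall>S. biorth_system X n S \<longrightarrow> |S| \<le>o |T| )"

text \<open>"s(K) <= |T|": every discrete subspace of K has at most |T| elements.\<close>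
definition spread_le :: "'a topology \<Rightarrow> 'b set \<Rightarrow> bool" where
  "spread_le X T \<longleftrightarrow>
     (\<forall>D. D \<subseteq> topspace X \<and> subtopology X D = discrete_topology D \<longrightarrow> |D| \<le>o |T| )"

end

theory Submission
  imports Defs
begin

text \<open>
  A 1-supported functional is a multiple a \<cdot> \<delta>_x of a point evaluation, so a
  1-supported biorthogonal system (f_i, a_i \<delta>_{x_i}) is the same thing as a family of points x_i
  together with continuous functions f_i such that f_i(x_i) \<noteq> 0 and f_j(x_i) = 0 for j \<noteq> i.

  (1) From such a family the points form a discrete subspace: the open set {f_i \<noteq> 0} meets
      {x_j} only in x_i.  This holds in every topological space.
  (2) Conversely, for a discrete subspace D of a normal T1 space, Urysohn's lemma gives for each
      d \<in> D a function that is 1 at d and vanishes on the other points of D; pairing it with \<delta>_d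
      yields a 1-supported biorthogonal system indexed by D.

  Compact Hausdorff spaces are normal and T1, so both directions apply and transfer the cardinal
  bounds, giving biort_1(C(K)) = s(K).
\<close>

lemma discrete_subtopology_iff:
  assumes "D \<subseteq> topspace X"
  shows "subtopology X D = discrete_topology D \<longleftrightarrow> (\<forall>d\<in>D. \<exists>U. openin X U \<and> U \<inter> D = {d})"
proof -
  have "subtopology X D = discrete_topology D \<longleftrightarrow> (\<forall>d\<in>D. openin (subtopology X D) {d})"
    using discrete_topology_unique[of D "subtopology X D"] assms
    by (auto simp: inf.absorb2)
  also have "\<dots> \<longleftrightarrow> (\<forall>d\<in>D. \<exists>U. openin X U \<and> U \<inter> D = {d})"
    unfolding openin_subtopology by (metis Int_commute)
  finally show ?thesis .
qed

lemma biorth_system_diag: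
  assumes "biorth_system X n S" and "(f, \<mu>) \<in> S"
  shows "f \<in> CK X" and "n_supported X n \<mu>" and "\<mu> f = 1"
  using assms unfolding biorth_system_def by blast+

lemma biorth_system_offdiag:
  assumes "biorth_system X n S" and "(f, \<mu>) \<in> S" and "(g, \<nu>) \<in> S" and "(f, \<mu>) \<noteq> (g, \<nu>)"
  shows "\<mu> g = 0"
proof -
  have "\<forall>(g, \<nu>)\<in>S. (f, \<mu>) \<noteq> (g, \<nu>) \<longrightarrow> \<mu> g = 0"
    using assms(1,2) unfolding biorth_system_def by fast
  then show ?thesis
    using assms(3,4) by fast
qed

lemma point_evaluation_1_supported:
  assumes "x \<in> topspace X"
  shows "n_supported X 1 (\<lambda>g. g x)"
  unfolding n_supported_def using assms
  by (intro exI[of _ "\<lambda>_. 1"] exI[of _ "\<lambda>_. x"]) auto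

lemma biorth_1_system_point:
  assumes S: "biorth_system X 1 S" and p: "p \<in> S"
  shows "\<exists>x\<in>topspace X. fst p x \<noteq> 0 \<and> (\<forall>q\<in>S. q \<noteq> p \<longrightarrow> fst q x = 0)"
proof -
  obtain f \<mu> where p_eq: "p = (f, \<mu>)" and fp: "(f, \<mu>) \<in> S"
    using p by (cases p) auto
  obtain a x where x: "x \<in> topspace X" and \<mu>: "\<forall>g\<in>CK X. \<mu> g = a * g x"
    using biorth_system_diag(2)[OF S fp] unfolding n_supported_def by auto
  have "a * f x = 1"
    using \<mu> biorth_system_diag(1,3)[OF S fp] by simp
  then have a: "a \<noteq> 0" and fx: "f x \<noteq> 0"
    by auto
  have vanish: "fst q x = 0" if q: "q \<in> S" "q \<noteq> p" for q
  proof -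
    have "a * fst q x = 0"
      using \<mu> biorth_system_diag(1)[OF S, of "fst q" "snd q"]
        biorth_system_offdiag[OF S fp, of "fst q" "snd q"] q p_eq by auto
    then show ?thesis using a by simp
  qed
  moreover have "fst p x \<noteq> 0"
    using fx p_eq by simp
  ultimately show ?thesis
    using x by blast
qed

lemma separated_points_discrete:
  assumes P: "\<And>p. p \<in> S \<Longrightarrow> P p \<in> topspace X"
    and F: "\<And>p. p \<in> S \<Longrightarrow> continuous_map X euclideanreal (F p)"
    and nonzero: "\<And>p. p \<in> S \<Longrightarrow> F p (P p) \<noteq> 0"
    and zero: "\<And>p q. p \<in> S \<Longrightarrow> q \<in> S \<Longrightarrow> q \<noteq> p \<Longrightarrow> F q (P p) = 0"
  shows "inj_on P S" and "subtopology X (P ` S) = discrete_topology (P ` S)"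
proof -
  show "inj_on P S"
    by (rule inj_onI) (metis nonzero zero)
  have "\<exists>U. openin X U \<and> U \<inter> P ` S = {P p}" if p: "p \<in> S" for p
  proof (intro exI conjI)
    show "openin X {x \<in> topspace X. F p x \<in> - {0}}"
      using F[OF p] by (intro openin_continuous_map_preimage) auto
    show "{x \<in> topspace X. F p x \<in> - {0}} \<inter> P ` S = {P p}"
    proof
      show "{P p} \<subseteq> {x \<in> topspace X. F p x \<in> - {0}} \<inter> P ` S"
        using p P nonzero by auto
      show "{x \<in> topspace X. F p x \<in> - {0}} \<inter> P ` S \<subseteq> {P p}"
        using zero[OF _ p] by blast
    qed
  qed
  then show "subtopology X (P ` S) = discrete_topology (P ` S)"
    using P by (subst discrete_subtopology_iff) auto
qed

lemma biorth_1_system_discrete_set: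
  assumes S: "biorth_system X 1 S"
  shows "\<exists>D. D \<subseteq> topspace X \<and> subtopology X D = discrete_topology D \<and> |S| \<le>o |D|"
proof -
  obtain P where P: "\<And>p. p \<in> S \<Longrightarrow> P p \<in> topspace X \<and> fst p (P p) \<noteq> 0 \<and>
                          (\<forall>q\<in>S. q \<noteq> p \<longrightarrow> fst q (P p) = 0)"
    using biorth_1_system_point[OF S] by metis
  have F: "continuous_map X euclideanreal (fst p)" if "p \<in> S" for p
    using biorth_system_diag(1)[OF S, of "fst p" "snd p"] that by (simp add: CK_def)
  have "inj_on P S" and "subtopology X (P ` S) = discrete_topology (P ` S)"
    by (rule separated_points_discrete[of S P X fst]; use P F in blast)+
  moreover have "P ` S \<subseteq> topspace X"
    using P by blast
  ultimately show ?thesis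
    using card_of_ordLeq by blast
qed

lemma Urysohn_bump:
  assumes "normal_space X" and "t1_space X" and "d \<in> U" and "openin X U"
  obtains f where "continuous_map X euclideanreal f" and "f d = 1"
    and "\<And>x. x \<in> topspace X - U \<Longrightarrow> f x = 0"
proof -
  have "d \<in> topspace X"
    using openin_subset[OF assms(4)] assms(3) by blast
  then have closed_d: "closedin X {d}"
    by (rule closedin_t1_singleton[OF assms(2)])
  have closed_U: "closedin X (topspace X - U)"
    using assms(4) by (simp add: closedin_diff)
  have "disjnt {d} (topspace X - U)"
    using assms(3) by (simp add: disjnt_def)
  then obtain f where "continuous_map X euclideanreal f" "f ` {d} \<subseteq> {1}"
    "f ` (topspace X - U) \<subseteq> {0}"
    using Urysohn_lemma_alt[OF assms(1) closed_d closed_U] by blast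
  then show thesis
    using that by blast
qed

lemma discrete_set_biorth_1_system:
  assumes X: "normal_space X" "t1_space X"
    and D: "D \<subseteq> topspace X" "subtopology X D = discrete_topology D"
  shows "\<exists>S :: (('a \<Rightarrow> real) \<times> (('a \<Rightarrow> real) \<Rightarrow> real)) set. biorth_system X 1 S \<and> |D| \<le>o |S|"
proof -
  have "\<exists>f. continuous_map X euclideanreal f \<and> f d = 1 \<and> (\<forall>e\<in>D. e \<noteq> d \<longrightarrow> f e = 0)"
    if "d \<in> D" for d
  proof -
    obtain U where U: "openin X U" "U \<inter> D = {d}"
      using discrete_subtopology_iff[OF D(1)] D(2) \<open>d \<in> D\<close> by blast
    then have "d \<in> U"
      by blast
    then obtain f where "continuous_map X euclideanreal f" "f d = 1"
      "\<And>x. x \<in> topspace X - U \<Longrightarrow> f x = 0"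
      using Urysohn_bump[OF X _ U(1)] by blast
    then show ?thesis using U D(1) by blast
  qed
  then obtain F where F: "\<And>d. d \<in> D \<Longrightarrow> continuous_map X euclideanreal (F d) \<and> F d d = 1 \<and>
                                (\<forall>e\<in>D. e \<noteq> d \<longrightarrow> F d e = 0)"
    by metis
  define S where "S = (\<lambda>d. (F d, \<lambda>g::'a \<Rightarrow> real. g d)) ` D"
  have diag: "F d \<in> CK X \<and> n_supported X 1 (\<lambda>g. g d) \<and> F d d = 1" if "d \<in> D" for d
    using F[OF that] point_evaluation_1_supported[of d X] D(1) that by (auto simp: CK_def)
  have offdiag: "F e d = 0" if "d \<in> D" "e \<in> D" "(F d, \<lambda>g::'a \<Rightarrow> real. g d) \<noteq> (F e, \<lambda>g. g e)"
    for d e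
    using F[OF that(2)] that by auto
  have "biorth_system X 1 S"
    unfolding biorth_system_def S_def using diag offdiag by auto
  moreover have "inj_on (\<lambda>d. (F d, \<lambda>g::'a \<Rightarrow> real. g d)) D"
    by (rule inj_onI) (metis F fst_conv zero_neq_one)
  ultimately show ?thesis
    unfolding S_def using card_of_ordLeq by blast
qed

theorem mainTheorem5:
  fixes X :: "'a topology" and T :: "'b set"
  assumes "compact_space X" and "Hausdorff_space X" and "infinite (topspace X)"
  shows "biort_le X 1 T \<longleftrightarrow> spread_le X T"
proof
  assume biort: "biort_le X 1 T"
  have X: "normal_space X" "t1_space X"
    using assms compact_Hausdorff_or_regular_imp_normal_space Hausdorff_imp_t1_space by blast+
  show "spread_le X T"
    unfolding spread_le_def
  proof (intro allI impI)
    fix D assume "D \<subseteq> topspace X \<and> subtopology X D = discrete_topology D"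
    then obtain S where S: "biorth_system X 1 S" and DS: "|D| \<le>o |S|"
      using discrete_set_biorth_1_system[OF X, of D] by blast
    have "|S| \<le>o |T|"
      using biort S unfolding biort_le_def by blast
    then show "|D| \<le>o |T|"
      using ordLeq_transitive[OF DS] by blast
  qed
next
  assume spread: "spread_le X T"
  show "biort_le X 1 T"
    unfolding biort_le_def
  proof (intro allI impI)
    fix S assume "biorth_system X 1 S"
    then obtain D where D: "D \<subseteq> topspace X" "subtopology X D = discrete_topology D"
      and SD: "|S| \<le>o |D|"
      using biorth_1_system_discrete_set by blast
    have "|D| \<le>o |T|"
      using spread D unfolding spread_le_def by blast
    then show "|S| \<le>o |T|"
      using ordLeq_transitive[OF SD] by blast
  qed
qed

end
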